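(* Let $f:\mathbb{R}^p\to\mathbb{R}$ be convex and differentiable with Lipschitz gradient, and for each $j\in[p]=\{1,\dots,p\}$ let $g_j:\mathbb{R}\to\mathbb{R}\cup\{+\infty\}$ be proper, closed and convex. Set $g(x)=\sum_{j=1}^p g_j(x_j)$ and $\Phi=f+g$. Assume $\arg\min_{x\in\mathbb{R}^p}\Phi(x)\neq\emptyset$, and that every minimizer $x^\star$ of $\Phi$ satisfies the non-degeneracy condition $-\nabla f(x^\star)\in\operatorname{ri}(\partial g(x^\star))$. Fix a minimizer $x^\star$ and let $\mathcal{S}=\mathcal{S}_{x^\star}$ be its generalized support. Assume that for all $j\in\mathcal{S}$, $g_j$ is $\mathcal{C}^2$ on a neighbourhood of $x^\star_j$, and that $f$ is $\mathcal{C}^2$ on a neighbourhood of $x^\star$. Let $(x^{(k)})_{k\ge 0}$ be the sequence generated by cyclic proximal coordinate descent with step sizes $0<\gamma_j\le 1/L_j$, and assume $x^{(k)}\to x^\star$. Then there exists $K>0$ such that for all $k\ge K$, $x^{(k)}_{\mathcal{S}^c}=x^\star_{\mathcal{S}^c}$.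
   Context: $\operatorname{ri}$ denotes relative interior and $\partial$ the convex subdifferential. $L_j$ is the coordinatewise Lipschitz constant of $\nabla_j f$: $|\nabla_j f(x+he_j)-\nabla_j f(x)|\le L_j|h|$ for all $x\in\mathbb{R}^p,h\in\mathbb{R}$. The generalized support of $x$ is $\mathcal{S}_x=\{j\in[p]:\partial g_j(x_j)\text{ is a singleton}\}$, and $\mathcal{S}^c=[p]\setminus\mathcal{S}$. For a convex $h$ and $\gamma>0$, $\operatorname{prox}_{\gamma h}(v)=\arg\min_y \frac{1}{2\gamma}\|v-y\|^2+h(y)$. Cyclic proximal coordinate descent: given $x^{(0)}\in\mathbb{R}^p$, for each $k\ge0$ set $x^{(0,k)}=x^{(k)}$; for $j=1,\dots,p$, set $x^{(j,k)}=x^{(j-1,k)}$ and then replace its $j$-th coordinate by $\operatorname{prox}_{\gamma_j g_j}\big(x^{(j-1,k)}_j-\gamma_j\nabla_j f(x^{(j-1,k)})\big)$; finally $x^{(k+1)}=x^{(p,k)}$. *)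

theory Defs
  imports "HOL-Analysis.Analysis"
begin

definition proper_fun :: "('a \<Rightarrow> ereal) \<Rightarrow> bool" where
  "proper_fun h \<longleftrightarrow> (\<forall>x. h x \<noteq> -\<infinity>) \<and> (\<exists>x. h x \<noteq> \<infinity>)"

definition convex_fun :: "('a::real_vector \<Rightarrow> ereal) \<Rightarrow> bool" where
  "convex_fun h \<longleftrightarrow> (\<forall>x y (t::real). 0 < t \<and> t < 1 \<longrightarrow>
      h (t *\<^sub>R x + (1 - t) *\<^sub>R y) \<le> ereal t * h x + ereal (1 - t) * h y)"

definition closed_fun :: "('a::topological_space \<Rightarrow> ereal) \<Rightarrow> bool" where
  "closed_fun h \<longleftrightarrow> closed {(x, t::real). h x \<le> ereal t}"

definition subdiff :: "('a::real_inner \<Rightarrow> ereal) \<Rightarrow> 'a \<Rightarrow> 'a set" where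
  "subdiff h x = {v. h x \<noteq> \<infinity> \<and> (\<forall>y. h y \<ge> h x + ereal (v \<bullet> (y - x)))}"

definition sep_sum :: "('n::finite \<Rightarrow> real \<Rightarrow> ereal) \<Rightarrow> real^'n \<Rightarrow> ereal" where
  "sep_sum G x = (\<Sum>j\<in>UNIV. G j (x $ j))"

definition prox :: "real \<Rightarrow> (real \<Rightarrow> ereal) \<Rightarrow> real \<Rightarrow> real" where
  "prox \<gamma> h v = (THE y. \<forall>z. ereal (1 / (2 * \<gamma>) * (v - y)\<^sup>2) + h y
                              \<le> ereal (1 / (2 * \<gamma>) * (v - z)\<^sup>2) + h z)"

definition gen_support :: "('n::finite \<Rightarrow> real \<Rightarrow> ereal) \<Rightarrow> real^'n \<Rightarrow> 'n set" where
  "gen_support G x = {j. \<exists>v. subdiff (G j) (x $ j) = {v}}"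

definition cd_update ::
  "(real^'n \<Rightarrow> real^'n) \<Rightarrow> ('n::finite \<Rightarrow> real) \<Rightarrow> ('n \<Rightarrow> real \<Rightarrow> ereal) \<Rightarrow> 'n \<Rightarrow> real^'n \<Rightarrow> real^'n" where
  "cd_update gradf \<gamma> G j x =
     (\<chi> i. if i = j then prox (\<gamma> j) (G j) (x $ j - \<gamma> j * gradf x $ j) else x $ i)"

definition cd_sweep ::
  "((real,'n) vec \<Rightarrow> (real,'n) vec) \<Rightarrow> ('n::{finite,linorder} \<Rightarrow> real) \<Rightarrow> ('n \<Rightarrow> real \<Rightarrow> ereal) \<Rightarrow> (real,'n) vec \<Rightarrow> (real,'n) vec" where
  "cd_sweep gradf \<gamma> G x = fold (cd_update gradf \<gamma> G) (sorted_list_of_set UNIV) x"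

end

theory Submission
  imports Defs
begin

text \<open>
  By non-degeneracy, \<open>-\<nabla>f(x\<^sup>\<star>)\<close> lies in the relative interior of
  \<open>\<partial>g(x\<^sup>\<star>)\<close>, which is the product of the intervals \<open>\<partial>g\<^sub>j(x\<^sup>\<star>\<^sub>j)\<close>. Outside the generalized
  support these intervals have more than one point, so there \<open>-\<nabla>\<^sub>jf(x\<^sup>\<star>)\<close> is an interior point
  of \<open>\<partial>g\<^sub>j(x\<^sup>\<star>\<^sub>j)\<close>. Within a sweep, coordinate \<open>j\<close> is updated at a point \<open>z\<close> mixing the
  coordinates of the old and the new iterate, so \<open>z \<rightarrow> x\<^sup>\<star>\<close>. Since \<open>prox\<^sub>\<gamma>\<^sub>h(v) = a\<close> as soon
  as \<open>(v - a)/\<gamma> \<in> \<partial>h(a)\<close>, and \<open>(z\<^sub>j - \<gamma>\<^sub>j \<nabla>\<^sub>jf(z) - x\<^sup>\<star>\<^sub>j)/\<gamma>\<^sub>j \<rightarrow> -\<nabla>\<^sub>jf(x\<^sup>\<star>)\<close>, the update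
  eventually returns exactly \<open>x\<^sup>\<star>\<^sub>j\<close>.
  Only continuity of \<open>\<nabla>f\<close>, positive step sizes, properness of the \<open>g\<^sub>j\<close>, non-degeneracy
  at \<open>x\<^sup>\<star>\<close> and convergence of the iterates are used; the other hypotheses belong to the
  paper's rate analysis.
\<close>

lemma cd_update_nth:
  "cd_update gradf \<gamma> G j x $ i = (if i = j then prox (\<gamma> j) (G j) (x $ j - \<gamma> j * gradf x $ j) else x $ i)"
  by (simp add: cd_update_def)

lemma fold_cd_update_nth_notin:
  "i \<notin> set l \<Longrightarrow> fold (cd_update gradf \<gamma> G) l x $ i = x $ i"
  by (induction l arbitrary: x) (auto simp: cd_update_nth)

lemma fold_cd_update_nth_intermediate:
  assumes "distinct l" "j \<in> set l"
  shows "\<exists>z. (\<forall>i. z $ i = x $ i \<or> z $ i = fold (cd_update gradf \<gamma> G) l x $ i) \<and>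
             fold (cd_update gradf \<gamma> G) l x $ j = cd_update gradf \<gamma> G j z $ j"
  using assms
proof (induction l arbitrary: x)
  case Nil
  then show ?case by simp
next
  case (Cons a l)
  let ?upd = "cd_update gradf \<gamma> G"
  show ?case
  proof (cases "j = a")
    case True
    then show ?thesis
      using Cons.prems by (intro exI[of _ x]) (auto simp: fold_cd_update_nth_notin)
  next
    case False
    with Cons.prems obtain z where
      z_mix: "\<forall>i. z $ i = ?upd a x $ i \<or> z $ i = fold ?upd l (?upd a x) $ i" and
      z_upd: "fold ?upd l (?upd a x) $ j = ?upd j z $ j"
      using Cons.IH[of "?upd a x"] by auto
    have "z $ i = x $ i \<or> z $ i = fold ?upd (a # l) x $ i" for i
      using z_mix[rule_format, of i] Cons.prems fold_cd_update_nth_notin[of a l _ _ _ "?upd a x"]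
      by (cases "i = a") (auto simp: cd_update_nth)
    then show ?thesis
      using z_upd by auto
  qed
qed

lemma cd_sweep_nth_intermediate:
  fixes x :: "(real, 'n::{finite,linorder}) vec"
  shows "\<exists>z. (\<forall>i. z $ i = x $ i \<or> z $ i = cd_sweep gradf \<gamma> G x $ i) \<and>
             cd_sweep gradf \<gamma> G x $ j = prox (\<gamma> j) (G j) (z $ j - \<gamma> j * gradf z $ j)"
  using fold_cd_update_nth_intermediate[of "sorted_list_of_set UNIV" j x gradf \<gamma> G]
  by (simp add: cd_sweep_def cd_update_nth)

lemma tendsto_vec_coordinatewise_choice:
  fixes X Y Z :: "'a \<Rightarrow> (real, 'n::finite) vec"
  assumes "(X \<longlongrightarrow> l) F" "(Y \<longlongrightarrow> l) F"
    and "\<And>t i. Z t $ i = X t $ i \<or> Z t $ i = Y t $ i"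
  shows "(Z \<longlongrightarrow> l) F"
proof (rule vec_tendstoI)
  fix i
  have X: "((\<lambda>t. X t $ i) \<longlongrightarrow> l $ i) F"
    using assms(1) by (rule tendsto_vec_nth)
  have Y: "((\<lambda>t. Y t $ i) \<longlongrightarrow> l $ i) F"
    using assms(2) by (rule tendsto_vec_nth)
  have bound: "norm (Z t $ i - l $ i) \<le> dist (X t $ i) (l $ i) + dist (Y t $ i) (l $ i)" for t
    using assms(3)[of t i] by (auto simp: dist_norm)
  have "((\<lambda>t. dist (X t $ i) (l $ i) + dist (Y t $ i) (l $ i)) \<longlongrightarrow> 0) F"
    using tendsto_add[OF tendsto_dist[OF X tendsto_const[of "l $ i"]]
        tendsto_dist[OF Y tendsto_const[of "l $ i"]]]
    by simp
  with always_eventually[OF allI[OF bound]] have "((\<lambda>t. Z t $ i - l $ i) \<longlongrightarrow> 0) F"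
    by (rule Lim_null_comparison)
  then show "((\<lambda>t. Z t $ i) \<longlongrightarrow> l $ i) F"
    by (rule LIM_zero_cancel)
qed

lemma subdiff_sep_sum_iff:
  assumes no_minf: "\<And>i t. G i t \<noteq> -\<infinity>"
  shows "w \<in> subdiff (sep_sum G) x \<longleftrightarrow> (\<forall>i. w $ i \<in> subdiff (G i) (x $ i))"
proof
  assume w: "w \<in> subdiff (sep_sum G) x"
  then have fin: "\<And>i. G i (x $ i) \<noteq> \<infinity>"
    by (auto simp: subdiff_def sep_sum_def sum_Pinfty)
  have ineq: "\<And>y. sep_sum G y \<ge> sep_sum G x + ereal (w \<bullet> (y - x))"
    using w by (auto simp: subdiff_def)
  define r where "r i = real_of_ereal (G i (x $ i))" for i
  have r: "G i (x $ i) = ereal (r i)" for i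
    using fin[of i] no_minf[of i "x $ i"] unfolding r_def by (cases "G i (x $ i)") auto
  show "\<forall>j. w $ j \<in> subdiff (G j) (x $ j)"
  proof
    fix j
    define R where "R = (\<Sum>i\<in>UNIV - {j}. r i)"
    have split: "sep_sum G y = G j (y $ j) + (\<Sum>i\<in>UNIV - {j}. G i (y $ i))" for y
      unfolding sep_sum_def by (simp add: sum.remove)
    have "G j t \<ge> G j (x $ j) + ereal (w $ j * (t - x $ j))" for t
    proof -
      define y where "y = x + (t - x $ j) *\<^sub>R axis j 1"
      have "(\<Sum>i\<in>UNIV - {j}. G i (y $ i)) = ereal R"
        unfolding R_def by (simp add: y_def axis_def r)
      moreover have "sep_sum G x = ereal (r j) + ereal R"
        unfolding split R_def by (simp add: r)
      moreover have "w \<bullet> (y - x) = w $ j * (t - x $ j)" and "y $ j = t"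
        by (simp_all add: y_def inner_axis)
      ultimately have "G j t + ereal R \<ge> ereal (r j) + ereal R + ereal (w $ j * (t - x $ j))"
        using ineq[of y] split[of y] by simp
      then show ?thesis
        using no_minf[of j t] r[of j] by (cases "G j t") auto
    qed
    then show "w $ j \<in> subdiff (G j) (x $ j)"
      using fin[of j] by (auto simp: subdiff_def)
  qed
next
  assume w: "\<forall>i. w $ i \<in> subdiff (G i) (x $ i)"
  have "sep_sum G y \<ge> sep_sum G x + ereal (w \<bullet> (y - x))" for y
  proof -
    have "sep_sum G x + ereal (w \<bullet> (y - x)) = (\<Sum>i\<in>UNIV. G i (x $ i) + ereal (w $ i * (y $ i - x $ i)))"
      by (simp add: sum.distrib sep_sum_def inner_vec_def)
    also have "\<dots> \<le> sep_sum G y"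
      unfolding sep_sum_def using w by (intro sum_mono) (auto simp: subdiff_def)
    finally show ?thesis .
  qed
  moreover have "sep_sum G x \<noteq> \<infinity>"
    using w by (auto simp: subdiff_def sep_sum_def sum_Pinfty)
  ultimately show "w \<in> subdiff (sep_sum G) x"
    by (auto simp: subdiff_def)
qed

lemma rel_interior_subdiff_sep_sum_nth:
  assumes no_minf: "\<And>i t. G i t \<noteq> -\<infinity>"
    and u: "u \<in> rel_interior (subdiff (sep_sum G) x)"
    and not_singleton: "\<nexists>c. subdiff (G j) (x $ j) = {c}"
  shows "u $ j \<in> interior (subdiff (G j) (x $ j))"
proof -
  let ?P = "subdiff (sep_sum G) x"
  note subdiff_nth = subdiff_sep_sum_iff[where G = G, OF no_minf]
  have uP: "u \<in> ?P"
    using u rel_interior_subset by blast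
  obtain e where e: "e > 0" "ball u e \<inter> affine hull ?P \<subseteq> ?P"
    using u by (auto simp: mem_rel_interior_ball)
  have u_nth: "u $ i \<in> subdiff (G i) (x $ i)" for i
    using uP subdiff_nth by blast
  then obtain c where c: "c \<in> subdiff (G j) (x $ j)" "c \<noteq> u $ j"
    using not_singleton by blast
  define w where "w = u + (c - u $ j) *\<^sub>R axis j 1"
  have wP: "w \<in> ?P"
    using c u_nth by (auto simp: subdiff_nth w_def axis_def)
  have "r \<in> subdiff (G j) (x $ j)" if r: "r \<in> ball (u $ j) e" for r
  proof -
    define s where "s = (r - u $ j) / (c - u $ j)"
    define p where "p = (1 - s) *\<^sub>R u + s *\<^sub>R w"
    have "p = u + (s * (c - u $ j)) *\<^sub>R axis j 1"
      by (simp add: p_def w_def algebra_simps)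
    then have p_eq: "p = u + (r - u $ j) *\<^sub>R axis j 1"
      using c(2) by (simp add: s_def)
    have "p \<in> affine hull ?P"
      using affine_affine_hull[of ?P] hull_inc[OF uP] hull_inc[OF wP]
      unfolding p_def affine_def by auto
    moreover have "p \<in> ball u e"
      using r by (simp add: p_eq dist_norm)
    ultimately have "p \<in> ?P"
      using e by blast
    then have "p $ j \<in> subdiff (G j) (x $ j)"
      using subdiff_nth by blast
    then show ?thesis
      by (simp add: p_eq)
  qed
  then show ?thesis
    using e(1) by (auto simp: mem_interior)
qed

lemma prox_eqI:
  assumes \<gamma>: "\<gamma> > 0" and no_minf: "\<And>t. h t \<noteq> -\<infinity>"
    and subgrad: "(v - a) / \<gamma> \<in> subdiff h a"
  shows "prox \<gamma> h v = a"
proof -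
  define w where "w = (v - a) / \<gamma>"
  define F where "F z = ereal (1 / (2 * \<gamma>) * (v - z)\<^sup>2) + h z" for z
  have sub: "\<And>z. h z \<ge> h a + ereal (w * (z - a))"
    using subgrad by (auto simp: subdiff_def w_def)
  obtain ra where ra: "h a = ereal ra"
    using subgrad no_minf[of a] by (cases "h a") (auto simp: subdiff_def)
  have strict: "F a < F z" if "z \<noteq> a" for z
  proof (cases "h z")
    case (real rz)
    have "1 / (2 * \<gamma>) * (v - z)\<^sup>2 = 1 / (2 * \<gamma>) * (v - a)\<^sup>2 - w * (z - a) + 1 / (2 * \<gamma>) * (z - a)\<^sup>2"
      using \<gamma> by (simp add: w_def field_simps power2_eq_square)
    moreover have "1 / (2 * \<gamma>) * (z - a)\<^sup>2 > 0"
      using \<gamma> that by simp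
    ultimately show ?thesis
      using sub[of z] by (simp add: F_def real ra)
  next
    case PInf
    then show ?thesis by (simp add: F_def ra)
  next
    case MInf
    then show ?thesis using no_minf by simp
  qed
  show ?thesis
    unfolding prox_def
  proof (rule the_equality)
    show "\<forall>z. ereal (1 / (2 * \<gamma>) * (v - a)\<^sup>2) + h a \<le> ereal (1 / (2 * \<gamma>) * (v - z)\<^sup>2) + h z"
      using strict by (metis F_def order.order_iff_strict)
  next
    fix y
    assume "\<forall>z. ereal (1 / (2 * \<gamma>) * (v - y)\<^sup>2) + h y \<le> ereal (1 / (2 * \<gamma>) * (v - z)\<^sup>2) + h z"
    then show "y = a"
      using strict[of y] by (metis F_def not_le)
  qed
qed

lemma eventually_prox_grad_step_eq:
  assumes \<gamma>: "\<gamma> > 0" and no_minf: "\<And>t. h t \<noteq> -\<infinity>"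
    and z: "(z \<longlongrightarrow> a) F" and d: "(d \<longlongrightarrow> c) F"
    and interior: "- c \<in> interior (subdiff h a)"
  shows "eventually (\<lambda>t. prox \<gamma> h (z t - \<gamma> * d t) = a) F"
proof -
  have "((\<lambda>t. (z t - \<gamma> * d t - a) / \<gamma>) \<longlongrightarrow> (a - \<gamma> * c - a) / \<gamma>) F"
    by (intro tendsto_intros z d) (use \<gamma> in simp)
  then have "((\<lambda>t. (z t - \<gamma> * d t - a) / \<gamma>) \<longlongrightarrow> - c) F"
    using \<gamma> by simp
  then have "eventually (\<lambda>t. (z t - \<gamma> * d t - a) / \<gamma> \<in> interior (subdiff h a)) F"
    using interior by (rule topological_tendstoD[OF _ open_interior])
  then show ?thesis
    by (rule eventually_mono) (auto intro: prox_eqI[OF \<gamma> no_minf] dest: interior_subset[THEN subsetD])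
qed

lemma eventually_cd_sweep_nth_eq:
  fixes xs :: "nat \<Rightarrow> (real, 'n::{finite,linorder}) vec"
  assumes iter: "\<And>k. xs (Suc k) = cd_sweep gradf \<gamma> G (xs k)"
    and conv: "xs \<longlonglongrightarrow> xstar"
    and gradf_cont: "isCont gradf xstar"
    and \<gamma>: "\<gamma> j > 0" and no_minf: "\<And>t. G j t \<noteq> -\<infinity>"
    and interior: "- gradf xstar $ j \<in> interior (subdiff (G j) (xstar $ j))"
  shows "eventually (\<lambda>k. xs k $ j = xstar $ j) sequentially"
proof -
  have "\<forall>k. \<exists>z. (\<forall>i. z $ i = xs k $ i \<or> z $ i = xs (Suc k) $ i) \<and>
             xs (Suc k) $ j = prox (\<gamma> j) (G j) (z $ j - \<gamma> j * gradf z $ j)"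
    unfolding iter using cd_sweep_nth_intermediate by blast
  then obtain Z where "\<forall>k. (\<forall>i. Z k $ i = xs k $ i \<or> Z k $ i = xs (Suc k) $ i) \<and>
             xs (Suc k) $ j = prox (\<gamma> j) (G j) (Z k $ j - \<gamma> j * gradf (Z k) $ j)"
    by (rule choice[THEN exE])
  then have Z_mix: "\<And>k i. Z k $ i = xs k $ i \<or> Z k $ i = xs (Suc k) $ i"
    and Z_upd: "\<And>k. xs (Suc k) $ j = prox (\<gamma> j) (G j) (Z k $ j - \<gamma> j * gradf (Z k) $ j)"
    by blast+
  have Z: "Z \<longlonglongrightarrow> xstar"
    using conv LIMSEQ_Suc[OF conv] Z_mix by (rule tendsto_vec_coordinatewise_choice)
  have "(\<lambda>k. gradf (Z k)) \<longlonglongrightarrow> gradf xstar"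
    using gradf_cont Z by (rule isCont_tendsto_compose)
  then have "eventually (\<lambda>k. xs (Suc k) $ j = xstar $ j) sequentially"
    unfolding Z_upd
    by (intro eventually_prox_grad_step_eq[OF \<gamma> no_minf _ _ interior] tendsto_vec_nth Z)
  then show ?thesis
    by (rule eventually_sequentially_Suc[THEN iffD1])
qed

lemma continuous_on_if_norm_diff_le:
  fixes F :: "'a::real_normed_vector \<Rightarrow> 'b::real_normed_vector"
  assumes "\<forall>x y. norm (F x - F y) \<le> M * norm (x - y)"
  shows "continuous_on S F"
proof -
  have "norm (F x - F y) \<le> max M 0 * norm (x - y)" for x y
    using assms mult_right_mono[OF max.cobounded1[of M 0] norm_ge_zero[of "x - y"]]
    by (meson order_trans)
  then have "(max M 0)-lipschitz_on S F"
    by (intro lipschitz_onI) (auto simp: dist_norm)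
  then show ?thesis
    by (rule lipschitz_on_continuous_on)
qed

theorem theorem1:
  fixes f :: "(real,'n::{finite,linorder}) vec \<Rightarrow> real"
    and gradf :: "(real,'n) vec \<Rightarrow> (real,'n) vec"
    and G :: "'n \<Rightarrow> real \<Rightarrow> ereal"
    and L \<gamma> :: "'n \<Rightarrow> real"
    and xstar :: "(real,'n) vec"
    and xs :: "nat \<Rightarrow> (real,'n) vec"
  assumes f_convex: "convex_on UNIV f"
    and f_grad: "\<And>x. (f has_derivative (\<lambda>h. gradf x \<bullet> h)) (at x)"
    and f_lip: "\<exists>M. \<forall>x y. norm (gradf x - gradf y) \<le> M * norm (x - y)"
    and G_proper: "\<And>j. proper_fun (G j)"
    and G_closed: "\<And>j. closed_fun (G j)"
    and G_convex: "\<And>j. convex_fun (G j)"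
    and argmin_ne: "\<exists>x. \<forall>y. ereal (f x) + sep_sum G x \<le> ereal (f y) + sep_sum G y"
    and nondegen: "\<And>x. (\<forall>y. ereal (f x) + sep_sum G x \<le> ereal (f y) + sep_sum G y) \<Longrightarrow>
                     - gradf x \<in> rel_interior (subdiff (sep_sum G) x)"
    and xstar_min: "\<forall>y. ereal (f xstar) + sep_sum G xstar \<le> ereal (f y) + sep_sum G y"
    and G_C2: "\<And>j. j \<in> gen_support G xstar \<Longrightarrow>
                 \<exists>U h h' h''. open U \<and> xstar $ j \<in> U \<and> continuous_on U h'' \<and>
                   (\<forall>t\<in>U. G j t = ereal (h t) \<and> (h has_real_derivative h' t) (at t)
                           \<and> (h' has_real_derivative h'' t) (at t))"
    and f_C2: "\<exists>U H. open U \<and> xstar \<in> U \<and> continuous_on U H \<and>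
                 (\<forall>x\<in>U. (gradf has_derivative blinfun_apply (H x)) (at x))"
    and L_pos: "\<And>j. L j > 0"
    and L_lip: "\<And>j x h. \<bar>gradf (x + h *\<^sub>R axis j 1) $ j - gradf x $ j\<bar> \<le> L j * \<bar>h\<bar>"
    and step: "\<And>j. 0 < \<gamma> j \<and> \<gamma> j \<le> 1 / L j"
    and iter: "\<And>k. xs (Suc k) = cd_sweep gradf \<gamma> G (xs k)"
    and conv: "xs \<longlonglongrightarrow> xstar"
  shows "\<exists>K>0. \<forall>k\<ge>K. \<forall>j\<in>- gen_support G xstar. xs k $ j = xstar $ j"
proof -
  have no_minf: "\<And>j t. G j t \<noteq> -\<infinity>"
    using G_proper by (simp add: proper_fun_def)
  have gradf_cont: "isCont gradf xstar"
    using f_lip continuous_on_if_norm_diff_le continuous_on_eq_continuous_at by blast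
  have "eventually (\<lambda>k. xs k $ j = xstar $ j) sequentially" if "j \<in> - gen_support G xstar" for j
  proof (rule eventually_cd_sweep_nth_eq[OF iter conv gradf_cont _ no_minf])
    show "\<gamma> j > 0"
      using step by blast
    show "- gradf xstar $ j \<in> interior (subdiff (G j) (xstar $ j))"
      using rel_interior_subdiff_sep_sum_nth[OF no_minf nondegen[OF xstar_min]] that
      by (simp add: gen_support_def)
  qed
  then have "eventually (\<lambda>k. \<forall>j\<in>- gen_support G xstar. xs k $ j = xstar $ j) sequentially"
    by (intro eventually_ball_finite) auto
  then obtain N where "\<forall>k\<ge>N. \<forall>j\<in>- gen_support G xstar. xs k $ j = xstar $ j"
    by (auto simp: eventually_sequentially)
  then show ?thesis
    by (intro exI[of _ "Suc N"]) auto
qed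

end
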